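(* Let $S$ be a right LCM monoid with property (AR) such that $S=S_{ci}^1S_c$, i.e. every $s\in S$ can be written as $s=tr$ with $t\in S_{ci}\cup\{1\}$ and $r\in S_c$. Let $\pi_p\colon C^*(S)\to\mathcal{Q}_p(S)$ and $\pi_c\colon C^*(S)\to\mathcal{Q}_c(S)$ be the quotient maps. Then $\mathcal{Q}(S)$ is (canonically isomorphic to) the quotient of $\mathcal{Q}_p(S)$ by the relations $\pi_p(v_sv_s^* )=1$ for all $s\in S_c$. Equivalently, $\mathcal{Q}(S)$ is the quotient of $\mathcal{Q}_c(S)$ by the relations $\sum_{f\in F}\pi_c(e_{fS})=1$ for all accurate proper foundation sets $F$ for $S$. In particular, these conclusions hold if the relation $\to$ on $S$ defined by $s\to t :\Leftrightarrow s\in t(S_c\setminus S^* )$ is terminating, i.e. there is no infinite sequence $(s_n)_{n\geq1}$ in $S$ with $s_n\to s_{n+1}$ and $s_n\neq s_{n+1}$ for all $n$.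
   Context: A right LCM monoid is a countable discrete monoid $S$ that is left cancellative and such that for all $s,t\in S$ the intersection $sS\cap tS$ is either empty or equal to $rS$ for some $r\in S$; $S^*$ denotes its group of units. A finite subset $F\subset S$ is a foundation set if for every $t\in S$ there is $s\in F$ with $sS\cap tS\neq\emptyset$; it is accurate if $fS\cap f'S=\emptyset$ for distinct $f,f'\in F$. $S$ has property (AR) if every foundation set $F$ admits an accurate foundation set $F'$ refining it (for each $f'\in F'$ there is $f\in F$ with $f'\in fS$). The core subsemigroup is $S_c=\{s\in S\mid sS\cap tS\neq\emptyset\text{ for all }t\in S\}$. An element $s\in S\setminus S_c$ is core irreducible if whenever $s=tr$ with $t\in S$, $r\in S_c$, then $r\in S^*$; $S_{ci}$ is the set of core irreducible elements and $S_{ci}^1=S_{ci}\cup\{1\}$. A foundation set is proper if it is contained in $S_{ci}$. The full semigroup $C^*$-algebra $C^*(S)$ (Li) is the universal $C^*$-algebra generated by isometries $\{v_s: s\in S\}$ and projections $\{e_X : X\in\mathcal{J}(S)\}$, $\mathcal{J}(S)=\{\emptyset\}\cup\{sS: s\in S\}$, subject to $v_{st}=v_sv_t$, $v_se_Xv_s^*=e_{sX}$, $e_S=1$, $e_\emptyset=0$, $e_Xe_Y=e_{X\cap Y}$; so $e_{sS}=v_sv_s^*$. The boundary quotient $\mathcal{Q}(S)$ is the quotient of $C^*(S)$ by $\prod_{f\in F}(1-e_{fS})=0$ for all foundation sets $F$ (under (AR) equivalently by $\sum_{f\in F}e_{fS}=1$ for all accurate foundation sets $F$). The core boundary quotient $\mathcal{Q}_c(S)$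 is the quotient of $C^*(S)$ by $v_sv_s^*=1$ for all $s\in S_c$. The proper boundary quotient $\mathcal{Q}_p(S)$ is the quotient of $C^*(S)$ by $\sum_{f\in F}e_{fS}=1$ for all accurate proper foundation sets $F$. *)

theory Defs
  imports Complex_Main "HOL-Library.Countable"
begin

class cstar_algebra = real_normed_algebra_1 + banach +
  fixes cscale :: "complex \<Rightarrow> 'a \<Rightarrow> 'a"
    and adj :: "'a \<Rightarrow> 'a"
  assumes cscale_add_left: "cscale (a + b) x = cscale a x + cscale b x"
    and cscale_add_right: "cscale a (x + y) = cscale a x + cscale a y"
    and cscale_cscale: "cscale a (cscale b x) = cscale (a * b) x"
    and cscale_of_real: "cscale (of_real r) x = scaleR r x"
    and cscale_mult_left: "cscale a (x * y) = cscale a x * y"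
    and cscale_mult_right: "cscale a (x * y) = x * cscale a y"
    and norm_cscale: "norm (cscale a x) = cmod a * norm x"
    and adj_add: "adj (x + y) = adj x + adj y"
    and adj_cscale: "adj (cscale a x) = cscale (cnj a) (adj x)"
    and adj_mult: "adj (x * y) = adj y * adj x"
    and adj_adj: "adj (adj x) = x"
    and cstar_identity: "norm (adj x * x) = norm x * norm x"

definition rideal :: "'m::monoid_mult \<Rightarrow> 'm set" where
  "rideal s = {s * t | t. True}"

definition left_cancellative :: "'m::monoid_mult itself \<Rightarrow> bool" where
  "left_cancellative _ \<longleftrightarrow> (\<forall>(s::'m) t u. s * t = s * u \<longrightarrow> t = u)"

definition right_LCM :: "'m::{monoid_mult,countable} itself \<Rightarrow> bool" where
  "right_LCM T \<longleftrightarrow> left_cancellative T \<and>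
     (\<forall>(s::'m) t. rideal s \<inter> rideal t = {} \<or> (\<exists>r. rideal s \<inter> rideal t = rideal r))"

definition units_of_monoid :: "'m::monoid_mult set" where
  "units_of_monoid = {u. \<exists>w. u * w = 1 \<and> w * u = 1}"

definition foundation_set :: "'m::monoid_mult set \<Rightarrow> bool" where
  "foundation_set F \<longleftrightarrow> finite F \<and> (\<forall>t. \<exists>s\<in>F. rideal s \<inter> rideal t \<noteq> {})"

definition accurate :: "'m::monoid_mult set \<Rightarrow> bool" where
  "accurate F \<longleftrightarrow> (\<forall>f\<in>F. \<forall>f'\<in>F. f \<noteq> f' \<longrightarrow> rideal f \<inter> rideal f' = {})"

definition refines :: "'m::monoid_mult set \<Rightarrow> 'm set \<Rightarrow> bool" where
  "refines F' F \<longleftrightarrow> (\<forall>f'\<in>F'. \<exists>f\<in>F. f' \<in> rideal f)"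

definition property_AR :: "'m::monoid_mult itself \<Rightarrow> bool" where
  "property_AR _ \<longleftrightarrow> (\<forall>F::'m set. foundation_set F \<longrightarrow>
      (\<exists>F'. foundation_set F' \<and> accurate F' \<and> refines F' F))"

definition core :: "'m::monoid_mult set" where
  "core = {s. \<forall>t. rideal s \<inter> rideal t \<noteq> {}}"

definition core_irreducible :: "'m::monoid_mult set" where
  "core_irreducible = {s. s \<notin> core \<and>
      (\<forall>t r. s = t * r \<and> r \<in> core \<longrightarrow> r \<in> units_of_monoid)}"

definition proper_foundation_set :: "'m::monoid_mult set \<Rightarrow> bool" where
  "proper_foundation_set F \<longleftrightarrow> foundation_set F \<and> F \<subseteq> core_irreducible"

definition ci_core_decomposition :: "'m::monoid_mult itself \<Rightarrow> bool" where
  "ci_core_decomposition _ \<longleftrightarrow> (\<forall>s::'m. \<exists>t r. (t \<in> core_irreducible \<or> t = 1) \<and> r \<in> core \<and> s = t * r)"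

definition core_arrow :: "'m::monoid_mult \<Rightarrow> 'm \<Rightarrow> bool" where
  "core_arrow s t \<longleftrightarrow> (\<exists>r \<in> core - units_of_monoid. s = t * r)"

definition core_arrow_terminating :: "'m::monoid_mult itself \<Rightarrow> bool" where
  "core_arrow_terminating _ \<longleftrightarrow>
     \<not> (\<exists>x :: nat \<Rightarrow> 'm. \<forall>n. core_arrow (x n) (x (Suc n)) \<and> x n \<noteq> x (Suc n))"

definition constructible_ideals :: "'m::monoid_mult set set" where
  "constructible_ideals = insert {} (range rideal)"

text \<open>A family of elements of a unital C*-algebra satisfying the defining relations of
the full semigroup C*-algebra C*(S); representations of C*(S) (unital *-homomorphisms
out of C*(S)) correspond exactly to such families.\<close>
definition li_family :: "('m::monoid_mult \<Rightarrow> 'a::cstar_algebra) \<Rightarrow> ('m set \<Rightarrow> 'a) \<Rightarrow> bool" where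
  "li_family v e \<longleftrightarrow>
     (\<forall>s. adj (v s) * v s = 1) \<and>
     (\<forall>X\<in>constructible_ideals. adj (e X) = e X \<and> e X * e X = e X) \<and>
     (\<forall>s t. v (s * t) = v s * v t) \<and>
     (\<forall>s. \<forall>X\<in>constructible_ideals. v s * e X * adj (v s) = e ((*) s ` X)) \<and>
     e UNIV = 1 \<and> e {} = 0 \<and>
     (\<forall>X\<in>constructible_ideals. \<forall>Y\<in>constructible_ideals. e X * e Y = e (X \<inter> Y))"

text \<open>Boundary relations: $\prod_{f\in F}(1-e_{fS}) = 0$ for all foundation sets $F$
(the product, of commuting projections, taken along any enumeration of $F$).\<close>
definition boundary_relations :: "('m::monoid_mult set \<Rightarrow> 'a::cstar_algebra) \<Rightarrow> bool" where
  "boundary_relations e \<longleftrightarrow> (\<forall>F. foundation_set F \<longrightarrow>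
     (\<forall>xs. set xs = F \<longrightarrow> prod_list (map (\<lambda>f. 1 - e (rideal f)) xs) = 0))"

definition proper_boundary_relations :: "('m::monoid_mult set \<Rightarrow> 'a::cstar_algebra) \<Rightarrow> bool" where
  "proper_boundary_relations e \<longleftrightarrow> (\<forall>F. proper_foundation_set F \<and> accurate F \<longrightarrow>
     (\<Sum>f\<in>F. e (rideal f)) = 1)"

definition core_relations :: "('m::monoid_mult \<Rightarrow> 'a::cstar_algebra) \<Rightarrow> bool" where
  "core_relations v \<longleftrightarrow> (\<forall>s\<in>core. v s * adj (v s) = 1)"

end

theory Submission
  imports Defs
begin

(*
  Write s = t r with t core irreducible or 1 and r in S_c. Right multiplication by a core
  element does not change which principal right ideals meet, so replacing every element f
  of an accurate foundation set F by its head t_f gives again an accurate foundation set,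
  and the core relations v_r v_r^* = 1 give e(fS) = e(t_f S). Hence the proper and core
  relations force the sum of e(fS) over every accurate foundation set to be 1, which under
  (AR) is equivalent to the boundary relations. Conversely each s in S_c forms the accurate
  foundation set {s}. If the relation s -> t is terminating, an element without such a
  decomposition would start an infinite chain of proper steps s -> t.
*)

lemma rideal_iff: "x \<in> rideal s \<longleftrightarrow> (\<exists>t. x = s * t)"
  by (auto simp: rideal_def)

lemma mult_in_rideal [simp]: "s * t \<in> rideal s"
  by (auto simp: rideal_iff)

lemma rideal_self [simp]: "s \<in> rideal s"
  using mult_in_rideal[of s 1] by simp

lemma rideal_one [simp]: "rideal 1 = UNIV"
  by (auto simp: rideal_iff)

lemma image_mult_UNIV: "(*) s ` UNIV = rideal s"
  by (auto simp: rideal_def)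

lemma rideal_mono: "g \<in> rideal f \<Longrightarrow> rideal g \<subseteq> rideal f"
  by (auto simp: rideal_iff mult.assoc)

lemma rideal_mult_subset: "rideal (s * t) \<subseteq> rideal s"
  by (simp add: rideal_mono)

lemma one_in_core: "(1::'m::monoid_mult) \<in> core"
  by (simp add: core_def) (metis empty_iff rideal_self)

lemma rideal_mult_core_meets:
  assumes "c \<in> core"
  shows "rideal (a * c) \<inter> rideal (a * x) \<noteq> {}"
proof -
  obtain y where "y \<in> rideal c" "y \<in> rideal x"
    using assms by (auto simp: core_def)
  then obtain p q where "c * p = x * q"
    by (metis rideal_iff)
  then have "a * (c * p) \<in> rideal (a * c) \<inter> rideal (a * x)"
    by (metis IntI mult.assoc mult_in_rideal)
  then show ?thesis by blast
qed

lemma rideal_mult_core_meets_iff: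
  assumes "c \<in> core"
  shows "rideal (t * c) \<inter> rideal u \<noteq> {} \<longleftrightarrow> rideal t \<inter> rideal u \<noteq> {}"
proof
  show "rideal (t * c) \<inter> rideal u \<noteq> {} \<Longrightarrow> rideal t \<inter> rideal u \<noteq> {}"
    using rideal_mult_subset by blast
next
  assume "rideal t \<inter> rideal u \<noteq> {}"
  then obtain a b where ab: "t * a = u * b"
    by (auto simp: rideal_iff)
  have "rideal (t * a) \<subseteq> rideal u"
    unfolding ab by (rule rideal_mult_subset)
  then show "rideal (t * c) \<inter> rideal u \<noteq> {}"
    using rideal_mult_core_meets[OF assms, of t a] by blast
qed

lemma core_mult_closed:
  assumes "a \<in> core" "b \<in> core"
  shows "a * b \<in> core"
  using assms rideal_mult_core_meets_iff[OF assms(2), of a] by (simp add: core_def)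

definition has_ci_core_decomposition :: "'m::monoid_mult \<Rightarrow> bool" where
  "has_ci_core_decomposition s \<longleftrightarrow>
     (\<exists>t r. (t \<in> core_irreducible \<or> t = 1) \<and> r \<in> core \<and> s = t * r)"

lemma has_ci_core_decomposition_mult_core:
  assumes "has_ci_core_decomposition t" "r \<in> core"
  shows "has_ci_core_decomposition (t * r)"
  using assms core_mult_closed unfolding has_ci_core_decomposition_def by (metis mult.assoc)

lemma core_arrow_from_undecomposable:
  fixes s :: "'m::monoid_mult"
  assumes lc: "left_cancellative TYPE('m)" and s: "\<not> has_ci_core_decomposition s"
  shows "\<exists>t. \<not> has_ci_core_decomposition t \<and> core_arrow s t \<and> s \<noteq> t"
proof -
  have "s \<notin> core"
    using s one_in_core by (force simp: has_ci_core_decomposition_def)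
  moreover have "s \<notin> core_irreducible"
    using s one_in_core by (force simp: has_ci_core_decomposition_def)
  ultimately obtain t r where tr: "s = t * r" "r \<in> core" "r \<notin> units_of_monoid"
    unfolding core_irreducible_def by blast
  have "\<not> has_ci_core_decomposition t"
    using s tr has_ci_core_decomposition_mult_core by blast
  moreover have "core_arrow s t"
    using tr by (auto simp: core_arrow_def)
  moreover have "s \<noteq> t"
  proof
    assume "s = t"
    then have "t * r = t * 1" using tr by simp
    then have "r = 1" using lc by (simp add: left_cancellative_def)
    then show False using tr(3) by (simp add: units_of_monoid_def)
  qed
  ultimately show ?thesis by blast
qed

lemma terminating_imp_ci_core_decomposition:
  fixes T :: "'m::monoid_mult itself"
  assumes "left_cancellative T" and "core_arrow_terminating T"
  shows "ci_core_decomposition T"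
proof (rule ccontr)
  assume "\<not> ci_core_decomposition T"
  then have "\<exists>s::'m. \<not> has_ci_core_decomposition s"
    by (auto simp: ci_core_decomposition_def has_ci_core_decomposition_def)
  then have "\<exists>x::nat \<Rightarrow> 'm. \<forall>n. \<not> has_ci_core_decomposition (x n) \<and>
                 core_arrow (x n) (x (Suc n)) \<and> x n \<noteq> x (Suc n)"
    using core_arrow_from_undecomposable assms(1)
    by (intro dependent_nat_choice) (auto simp: left_cancellative_def)
  then show False
    using assms(2) by (auto simp: core_arrow_terminating_def)
qed

lemma accurate_with_one:
  assumes "accurate F" "1 \<in> F"
  shows "F = {1}"
  using assms by (auto simp: accurate_def) (metis Int_UNIV_left empty_iff rideal_one rideal_self)

lemma accurate_foundation_set_core_heads:
  assumes F: "foundation_set F" "accurate F"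
    and hc: "\<And>f. f \<in> F \<Longrightarrow> h f * c f = f \<and> c f \<in> core"
  shows "inj_on h F" "foundation_set (h ` F)" "accurate (h ` F)"
proof -
  have meets: "f = f'"
    if "f \<in> F" "f' \<in> F" "rideal (h f) \<inter> rideal (h f') \<noteq> {}" for f f'
  proof -
    have "rideal (h f * c f) \<inter> rideal (h f' * c f') \<noteq> {}"
      using that hc rideal_mult_core_meets_iff by (metis inf_commute)
    then show ?thesis
      using that(1,2) hc F(2) by (metis accurate_def)
  qed
  show "inj_on h F"
    by (intro inj_onI) (metis meets IntI empty_iff rideal_self)
  show "accurate (h ` F)"
    using meets by (auto simp: accurate_def)
  have "\<exists>g\<in>h ` F. rideal g \<inter> rideal t \<noteq> {}" for t
  proof -
    obtain f where "f \<in> F" "rideal f \<inter> rideal t \<noteq> {}"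
      using F(1) unfolding foundation_set_def by blast
    moreover have "rideal f \<subseteq> rideal (h f)"
      using hc[OF \<open>f \<in> F\<close>] rideal_mult_subset by metis
    ultimately show ?thesis by blast
  qed
  then show "foundation_set (h ` F)"
    using F(1) by (simp add: foundation_set_def)
qed

lemma prod_list_commute:
  fixes q :: "'a::monoid_mult"
  assumes "\<And>y. y \<in> set ys \<Longrightarrow> y * q = q * y"
  shows "prod_list ys * q = q * prod_list ys"
  using assms by (induction ys) (simp_all, metis mult.assoc)

lemma prod_list_one_minus_orthogonal:
  fixes P :: "'b \<Rightarrow> 'a::ring_1"
  assumes "distinct xs"
    and "\<And>x y. x \<in> set xs \<Longrightarrow> y \<in> set xs \<Longrightarrow> x \<noteq> y \<Longrightarrow> P x * P y = 0"
  shows "(\<Prod>x\<leftarrow>xs. 1 - P x) = 1 - sum P (set xs)"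
  using assms
proof (induction xs)
  case Nil
  then show ?case by simp
next
  case (Cons a xs)
  have "P a * sum P (set xs) = 0"
    using Cons.prems by (auto simp: sum_distrib_left intro: sum.neutral)
  then have "(1 - P a) * (1 - sum P (set xs)) = 1 - (P a + sum P (set xs))"
    by (simp add: algebra_simps)
  then show ?case
    using Cons by simp
qed

lemma prod_list_one_minus_annihilates:
  fixes P :: "'b \<Rightarrow> 'a::ring_1"
  assumes "f \<in> set xs" "P f * q = q"
    and "\<And>x. x \<in> set xs \<Longrightarrow> P x * q = q * P x"
  shows "(\<Prod>x\<leftarrow>xs. 1 - P x) * q = 0"
  using assms
proof (induction xs)
  case Nil
  then show ?case by simp
next
  case (Cons a xs)
  show ?case
  proof (cases "f \<in> set xs")
    case True
    then show ?thesis using Cons by (simp add: mult.assoc)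
  next
    case False
    then have head: "(1 - P a) * q = 0"
      using Cons.prems by (simp add: algebra_simps)
    have tail: "(\<Prod>x\<leftarrow>xs. 1 - P x) * q = q * (\<Prod>x\<leftarrow>xs. 1 - P x)"
      using Cons.prems by (intro prod_list_commute) (auto simp: algebra_simps)
    have "(\<Prod>x\<leftarrow>a # xs. 1 - P x) * q = (1 - P a) * ((\<Prod>x\<leftarrow>xs. 1 - P x) * q)"
      by (simp add: mult.assoc)
    also have "\<dots> = (1 - P a) * q * (\<Prod>x\<leftarrow>xs. 1 - P x)"
      by (simp add: tail mult.assoc)
    finally show ?thesis
      by (simp add: head)
  qed
qed

definition accurate_boundary_relations :: "('m::monoid_mult set \<Rightarrow> 'a::cstar_algebra) \<Rightarrow> bool" where
  "accurate_boundary_relations e \<longleftrightarrow> (\<forall>F. foundation_set F \<and> accurate F \<longrightarrow>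
     (\<Sum>f\<in>F. e (rideal f)) = 1)"

context
  fixes v :: "'m::monoid_mult \<Rightarrow> 'a::cstar_algebra" and e :: "'m set \<Rightarrow> 'a"
  assumes li: "li_family v e"
begin

lemma e_rideal_eq: "e (rideal s) = v s * adj (v s)"
proof -
  have "rideal 1 \<in> constructible_ideals"
    by (simp add: constructible_ideals_def del: rideal_one)
  then have "v s * e (rideal 1) * adj (v s) = e ((*) s ` rideal 1)"
    using li unfolding li_family_def by blast
  then show ?thesis
    using li by (simp add: li_family_def image_mult_UNIV)
qed

lemma e_rideal_mult: "e (rideal f) * e (rideal g) = e (rideal f \<inter> rideal g)"
  using li by (simp add: li_family_def constructible_ideals_def)

lemma e_rideal_commute: "e (rideal f) * e (rideal g) = e (rideal g) * e (rideal f)"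
  by (simp add: e_rideal_mult Int_commute)

lemma e_rideal_disjoint: "rideal f \<inter> rideal g = {} \<Longrightarrow> e (rideal f) * e (rideal g) = 0"
  using li by (simp add: e_rideal_mult li_family_def)

lemma e_rideal_absorb: "g \<in> rideal f \<Longrightarrow> e (rideal f) * e (rideal g) = e (rideal g)"
  by (simp add: e_rideal_mult rideal_mono Int_absorb1)

lemma core_relations_iff: "core_relations v \<longleftrightarrow> (\<forall>s\<in>core. e (rideal s) = 1)"
  by (simp add: core_relations_def e_rideal_eq)

lemma e_rideal_mult_core:
  assumes "core_relations v" "r \<in> core"
  shows "e (rideal (t * r)) = e (rideal t)"
proof -
  have "v (t * r) * adj (v (t * r)) = v t * (v r * adj (v r)) * adj (v t)"
    using li by (simp add: li_family_def adj_mult mult.assoc)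
  also have "\<dots> = v t * adj (v t)"
    using assms by (simp add: core_relations_def)
  finally show ?thesis
    by (simp add: e_rideal_eq)
qed

lemma boundary_relations_imp_accurate:
  assumes "boundary_relations e"
  shows "accurate_boundary_relations e"
  unfolding accurate_boundary_relations_def
proof (intro allI impI, elim conjE)
  fix F :: "'m set"
  assume F: "foundation_set F" "accurate F"
  then obtain xs where xs: "set xs = F" "distinct xs"
    using finite_distinct_list by (auto simp: foundation_set_def)
  have "(\<Prod>f\<leftarrow>xs. 1 - e (rideal f)) = 1 - (\<Sum>f\<in>set xs. e (rideal f))"
  proof (rule prod_list_one_minus_orthogonal[OF xs(2)])
    fix f g
    assume "f \<in> set xs" "g \<in> set xs" "f \<noteq> g"
    then show "e (rideal f) * e (rideal g) = 0"
      using F(2) xs(1) by (intro e_rideal_disjoint) (auto simp: accurate_def)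
  qed
  moreover have "(\<Prod>f\<leftarrow>xs. 1 - e (rideal f)) = 0"
    using assms F(1) xs(1) by (simp add: boundary_relations_def)
  ultimately show "(\<Sum>f\<in>F. e (rideal f)) = 1"
    using xs(1) by simp
qed

lemma accurate_imp_boundary_relations:
  fixes T :: "'m itself"
  assumes "property_AR T" "accurate_boundary_relations e"
  shows "boundary_relations e"
  unfolding boundary_relations_def
proof (intro allI impI)
  fix F :: "'m set" and xs
  assume F: "foundation_set F" and xs: "set xs = F"
  obtain F' where F': "foundation_set F'" "accurate F'" "refines F' F"
    using assms(1) F unfolding property_AR_def by blast
  have "(\<Prod>f\<leftarrow>xs. 1 - e (rideal f)) * e (rideal g) = 0" if "g \<in> F'" for g
  proof -
    from \<open>g \<in> F'\<close> obtain f where f: "f \<in> F" and g: "g \<in> rideal f"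
      using F'(3) unfolding refines_def by blast
    show ?thesis
      using prod_list_one_minus_annihilates[where P = "\<lambda>f. e (rideal f)",
          OF f[folded xs] e_rideal_absorb[OF g]] e_rideal_commute by blast
  qed
  then have "(\<Prod>f\<leftarrow>xs. 1 - e (rideal f)) * (\<Sum>g\<in>F'. e (rideal g)) = 0"
    by (simp add: sum_distrib_left sum.neutral)
  moreover have "(\<Sum>g\<in>F'. e (rideal g)) = 1"
    using assms(2) F' by (simp add: accurate_boundary_relations_def)
  ultimately show "(\<Prod>f\<leftarrow>xs. 1 - e (rideal f)) = 0"
    by simp
qed

lemma boundary_relations_iff_accurate:
  fixes T :: "'m itself"
  assumes "property_AR T"
  shows "boundary_relations e \<longleftrightarrow> accurate_boundary_relations e"
  using assms boundary_relations_imp_accurate accurate_imp_boundary_relations by blast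

lemma proper_core_imp_accurate:
  fixes T :: "'m itself"
  assumes dec: "ci_core_decomposition T"
    and proper: "proper_boundary_relations e" and core: "core_relations v"
  shows "accurate_boundary_relations e"
  unfolding accurate_boundary_relations_def
proof (intro allI impI, elim conjE)
  fix F :: "'m set"
  assume F: "foundation_set F" "accurate F"
  obtain h c where hc: "\<And>s::'m. (h s \<in> core_irreducible \<or> h s = 1) \<and> c s \<in> core \<and> h s * c s = s"
    using dec unfolding ci_core_decomposition_def by metis
  note heads = accurate_foundation_set_core_heads[OF F, of h c]
  have "(\<Sum>f\<in>F. e (rideal f)) = (\<Sum>f\<in>F. e (rideal (h f)))"
    by (intro sum.cong refl) (metis hc e_rideal_mult_core[OF core])
  also have "\<dots> = (\<Sum>g\<in>h ` F. e (rideal g))"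
    using heads hc by (simp add: sum.reindex)
  also have "\<dots> = 1"
  proof (cases "1 \<in> h ` F")
    case True
    then have "h ` F = {1}"
      using heads hc accurate_with_one by blast
    then show ?thesis
      using li by (simp add: li_family_def)
  next
    case False
    then have "proper_foundation_set (h ` F)"
      using heads hc by (force simp: proper_foundation_set_def)
    then show ?thesis
      using proper heads hc by (simp add: proper_boundary_relations_def)
  qed
  finally show "(\<Sum>f\<in>F. e (rideal f)) = 1" .
qed

lemma accurate_boundary_relations_iff_proper_core:
  fixes T :: "'m itself"
  assumes "ci_core_decomposition T"
  shows "accurate_boundary_relations e \<longleftrightarrow> proper_boundary_relations e \<and> core_relations v"
proof (intro iffI conjI)
  assume acc: "accurate_boundary_relations e"
  then show "proper_boundary_relations e"
    by (simp add: accurate_boundary_relations_def proper_boundary_relations_def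
        proper_foundation_set_def)
  have "e (rideal s) = 1" if "s \<in> core" for s
  proof -
    have "foundation_set {s}" "accurate {s}"
      using that by (simp_all add: foundation_set_def core_def accurate_def)
    then show ?thesis
      using acc unfolding accurate_boundary_relations_def by force
  qed
  then show "core_relations v"
    by (simp add: core_relations_iff)
next
  show "proper_boundary_relations e \<and> core_relations v \<Longrightarrow> accurate_boundary_relations e"
    using assms proper_core_imp_accurate by blast
qed

end

theorem proposition2p10:
  fixes T :: "'m::{monoid_mult,countable} itself"
  assumes "right_LCM T"
    and "property_AR T"
    and "ci_core_decomposition T \<or> core_arrow_terminating T"
  shows "\<forall>(v :: 'm \<Rightarrow> 'a::cstar_algebra) (e :: 'm set \<Rightarrow> 'a). li_family v e \<longrightarrow>
           (boundary_relations e \<longleftrightarrow> proper_boundary_relations e \<and> core_relations v)"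
proof (intro allI impI)
  fix v :: "'m \<Rightarrow> 'a" and e :: "'m set \<Rightarrow> 'a"
  assume li: "li_family v e"
  have "ci_core_decomposition T"
    using assms(1,3) terminating_imp_ci_core_decomposition by (auto simp: right_LCM_def)
  then show "boundary_relations e \<longleftrightarrow> proper_boundary_relations e \<and> core_relations v"
    using boundary_relations_iff_accurate[OF li assms(2)] accurate_boundary_relations_iff_proper_core[OF li]
    by blast
qed

end
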